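(* Let $2\le r<n$ be integers, let $p\in(0,1)$, and let real numbers $x_i\ge 0$ for $i=r+1,\dots,n$ and $y_i\ge u\ge 0$ for $i=1,\dots,r-1$ satisfy \[ \sum_{i=r+1}^n x_i + nu=\sum_{i=1}^{r-1}y_i. \] Then \[ \sum_{i=r+1}^n x_i^p+(r-1)u^p\le \Bigl(1-\frac1n\Bigr)^p\Bigl(\sum_{i=r+1}^n x_i^p+\sum_{i=1}^{r-1}y_i^p\Bigr). \] *)

theory Defs
  imports Complex_Main
begin

end

theory Submission
  imports Defs "HOL-Analysis.Convex"
begin

text \<open>
  Put \<open>m = n - r\<close> and \<open>k = r - 1\<close>, so \<open>n = m + k + 1\<close>, and let \<open>s\<close> be the mean of the \<open>x\<^sub>i\<close>.
  As \<open>t \<mapsto> t\<^sup>p\<close> is concave, replacing every \<open>x\<^sub>i\<close> by \<open>s\<close> can only increase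
  \<open>\<Sum> x\<^sub>i\<^sup>p\<close>, and concentrating the total excess \<open>m s + (m + 1) u\<close> of the \<open>y\<^sub>i\<close> over \<open>u\<close>
  in a single \<open>y\<^sub>i\<close> can only decrease \<open>\<Sum> y\<^sub>i\<^sup>p\<close>. What remains is an inequality in
  \<open>s\<close> and \<open>u\<close>: with \<open>c = 1 - 1/n\<close> and \<open>e = 1 - c\<^sup>p \<le> p/(n - 1)\<close> it reads
  \<open>e m s\<^sup>p + (1 + e (k - 1)) u\<^sup>p \<le> (c m s + c (m + 2) u)\<^sup>p\<close>. This is again concavity of
  \<open>t\<^sup>p\<close>, applied with weights proportional to \<open>e m\<close> and \<open>1 + e (k - 1)\<close>, once weighted
  AM-GM shows that these coefficients are small compared with \<open>(c m)\<^sup>p\<close> and \<open>(c (m + 2))\<^sup>p\<close>.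
\<close>

lemma ln_ge_one_minus_inverse:
  fixes x :: real
  assumes "0 < x"
  shows "1 - 1 / x \<le> ln x"
  using ln_le_minus_one [of "1 / x"] assms by (simp add: ln_div)

lemma one_add_mult_ln_le_powr:
  fixes c p :: real
  assumes "0 < c"
  shows "1 + p * ln c \<le> c powr p"
  using exp_ge_add_one_self [of "p * ln c"] assms by (simp add: powr_def)

lemma one_minus_powr_le:
  fixes c p :: real
  assumes "0 < c" "0 \<le> p"
  shows "1 - c powr p \<le> p * (1 / c - 1)"
proof -
  have "- (p * ln c) \<le> p * (1 / c - 1)"
    using mult_left_mono [OF ln_ge_one_minus_inverse [OF assms(1)] assms(2)]
    by (simp add: algebra_simps)
  then show ?thesis
    using one_add_mult_ln_le_powr [OF assms(1), of p] by linarith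
qed

lemma one_minus_powr_one_minus_inverse_bounds:
  fixes N p :: real
  assumes "0 < N" "0 < p"
  shows "0 < 1 - (1 - 1 / (N + 1)) powr p"
    and "(1 - (1 - 1 / (N + 1)) powr p) * N \<le> p"
proof -
  define c where "c = 1 - 1 / (N + 1)"
  have "0 < c" "c < 1" and "1 / c - 1 = 1 / N"
    using assms(1) by (auto simp: c_def field_simps)
  then show "0 < 1 - (1 - 1 / (N + 1)) powr p"
    using powr_less_mono2 [of p c 1] assms(2) by (simp add: c_def)
  show "(1 - (1 - 1 / (N + 1)) powr p) * N \<le> p"
    using one_minus_powr_le [of c p] \<open>0 < c\<close> \<open>1 / c - 1 = 1 / N\<close> assms
    by (simp add: c_def [symmetric] pos_le_divide_eq)
qed

lemma concave_on_powr:
  fixes p :: real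
  assumes "0 \<le> p" "p \<le> 1"
  shows "concave_on {0..} (\<lambda>x. x powr p)"
proof (rule concave_on_linorderI)
  have concave_pos: "concave_on {0<..} (\<lambda>x::real. x powr p)"
  proof (rule f''_le0_imp_concave)
    show "((\<lambda>x. x powr p) has_real_derivative p * x powr (p - 1)) (at x)"
      if "x \<in> {0<..}" for x :: real
      using that by (auto intro!: derivative_eq_intros)
    show "((\<lambda>x. p * x powr (p - 1)) has_real_derivative p * ((p - 1) * x powr (p - 1 - 1))) (at x)"
      if "x \<in> {0<..}" for x :: real
      using that by (auto intro!: derivative_eq_intros)
    show "p * ((p - 1) * x powr (p - 1 - 1)) \<le> 0" for x :: real
      using assms by (intro mult_nonneg_nonpos mult_nonpos_nonneg) auto
  qed simp
  fix t x y :: real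
  assume t: "0 < t" "t < 1" and xy: "x \<in> {0..}" "y \<in> {0..}" "x < y"
  show "(1 - t) * x powr p + t * y powr p \<le> ((1 - t) *\<^sub>R x + t *\<^sub>R y) powr p"
  proof (cases "x = 0")
    case True
    have "t \<le> t powr p"
      using powr_mono' [of p 1 t] t assms by simp
    then have "t * y powr p \<le> t powr p * y powr p"
      by (rule mult_right_mono) simp
    then show ?thesis
      using True xy t by (simp add: powr_mult)
  next
    case False
    then show ?thesis
      using concave_onD [OF concave_pos, of t x y] t xy by simp
  qed
qed simp

lemma concave_on_sum_le_card_mult_mean:
  fixes f :: "real \<Rightarrow> real"
  assumes "concave_on C f" "finite I" "I \<noteq> {}" "\<And>i. i \<in> I \<Longrightarrow> x i \<in> C"
  shows "(\<Sum>i\<in>I. f (x i)) \<le> card I * f ((\<Sum>i\<in>I. x i) / card I)"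
proof -
  have card: "real (card I) > 0"
    using assms(2,3) by (simp add: card_gt_0_iff)
  have "(\<Sum>i\<in>I. 1 / card I * f (x i)) \<le> f (\<Sum>i\<in>I. (1 / card I) *\<^sub>R x i)"
    by (rule concave_on_sum) (use assms card in auto)
  then show ?thesis
    using card by (simp add: sum_divide_distrib [symmetric] divide_simps mult.commute)
qed

lemma concave_on_sum_ge_concentrated:
  fixes f :: "real \<Rightarrow> real"
  assumes f: "concave_on {u..} f" and "finite J" and y: "\<And>i. i \<in> J \<Longrightarrow> u \<le> y i"
  shows "(real (card J) - 1) * f u + f (u + (\<Sum>i\<in>J. y i - u)) \<le> (\<Sum>i\<in>J. f (y i))"
proof -
  define Z where "Z = (\<Sum>i\<in>J. y i - u)"
  have excess_le: "y i - u \<le> Z" if "i \<in> J" for i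
    unfolding Z_def using that y \<open>finite J\<close> by (intro member_le_sum) auto
  show ?thesis
  proof (cases "Z = 0")
    case True
    then have "y i = u" if "i \<in> J" for i
      using excess_le [OF that] y [OF that] by simp
    then show ?thesis
      using True by (simp add: Z_def algebra_simps)
  next
    case False
    moreover have "0 \<le> Z"
      unfolding Z_def using y by (simp add: sum_nonneg)
    ultimately have "Z > 0"
      by simp
    define t where "t i = (y i - u) / Z" for i
    have "(1 - t i) * f u + t i * f (u + Z) \<le> f (y i)" if "i \<in> J" for i
    proof -
      have "0 \<le> t i" "t i \<le> 1"
        using excess_le [OF that] y [OF that] \<open>Z > 0\<close> by (auto simp: t_def)
      moreover have "(1 - t i) *\<^sub>R u + t i *\<^sub>R (u + Z) = y i"
        using \<open>Z > 0\<close> by (simp add: t_def field_simps)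
      ultimately show ?thesis
        using concave_onD [OF f, of "t i" u "u + Z"] \<open>Z > 0\<close> by simp
    qed
    then have "(\<Sum>i\<in>J. (1 - t i) * f u + t i * f (u + Z)) \<le> (\<Sum>i\<in>J. f (y i))"
      by (rule sum_mono)
    moreover have "(\<Sum>i\<in>J. t i) = 1"
      using \<open>Z > 0\<close> by (simp add: t_def Z_def sum_divide_distrib [symmetric])
    then have "(\<Sum>i\<in>J. (1 - t i) * f u + t i * f (u + Z)) = (real (card J) - 1) * f u + f (u + Z)"
      by (simp add: sum.distrib sum_subtractf left_diff_distrib flip: sum_distrib_right)
    ultimately show ?thesis
      by (simp add: Z_def)
  qed
qed

lemma sum_powr_ge_concentrated:
  fixes u p :: real
  assumes "0 \<le> u" "0 \<le> p" "p \<le> 1" "finite J" "\<And>i. i \<in> J \<Longrightarrow> u \<le> y i"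
  shows "(real (card J) - 1) * u powr p + (u + (\<Sum>i\<in>J. y i - u)) powr p \<le> (\<Sum>i\<in>J. y i powr p)"
proof (rule concave_on_sum_ge_concentrated)
  show "concave_on {u..} (\<lambda>x. x powr p)"
    using concave_on_powr [OF assms(2,3)] unfolding concave_on_def
    by (rule convex_on_subset) (use assms(1) in auto)
qed (use assms in auto)

text \<open>The right-hand side is the perspective of \<open>t\<^sup>p\<close> at weight \<open>a / s\<close>; weighted AM-GM
  turns the hypothesis into \<open>a\<^sup>p s\<^bsup>1 - p\<^esup> \<le> K\<^sup>p\<close>.\<close>

lemma mult_powr_le_perspective:
  fixes a s K t p :: real
  assumes "0 < a" "0 < s" "0 < p" "p < 1" "0 \<le> K" "0 \<le> t"
    and "p * a + (1 - p) * s \<le> K powr p"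
  shows "a * t powr p \<le> (a / s) * (K * t / (a / s)) powr p"
proof -
  have "a powr p * s powr (1 - p) \<le> K powr p"
    using Youngs_inequality_0 [of p "1 - p" a s] assms by simp
  then have "(a / s) powr (1 - p) * (a powr p * s powr (1 - p)) \<le> (a / s) powr (1 - p) * K powr p"
    by (rule mult_left_mono) simp
  moreover have "(a / s) powr (1 - p) * (a powr p * s powr (1 - p)) = a"
    using assms by (simp add: powr_divide powr_add [symmetric])
  moreover have "(a / s) * (K * t / (a / s)) powr p = (a / s) powr (1 - p) * K powr p * t powr p"
    using assms by (simp add: powr_divide powr_mult powr_diff)
  ultimately show ?thesis
    using assms by (metis mult_right_mono powr_ge_zero)
qed

lemma two_point_powr_le:
  fixes a b K L s u p :: real
  assumes "0 < a" "0 < b" "0 < p" "p < 1" "0 \<le> K" "0 \<le> L" "0 \<le> s" "0 \<le> u"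
    and "p * a + (1 - p) * (a + b) \<le> K powr p"
    and "p * b + (1 - p) * (a + b) \<le> L powr p"
  shows "a * s powr p + b * u powr p \<le> (K * s + L * u) powr p"
proof -
  define w where "w = b / (a + b)"
  have "0 \<le> w" "w \<le> 1" and one_minus_w: "1 - w = a / (a + b)"
    using assms(1,2) by (auto simp: w_def field_simps)
  define x where "x = K * s / (1 - w)"
  define y where "y = L * u / w"
  have "a * s powr p + b * u powr p \<le> (1 - w) * x powr p + w * y powr p"
    unfolding x_def y_def one_minus_w unfolding w_def
    using mult_powr_le_perspective [of a "a + b" p K s]
      mult_powr_le_perspective [of b "a + b" p L u] assms
    by (simp add: add_mono)
  also have "\<dots> \<le> ((1 - w) * x + w * y) powr p"
    using concave_onD [OF concave_on_powr, of p w x y] \<open>0 \<le> w\<close> \<open>w \<le> 1\<close> assms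
    by (simp add: x_def y_def)
  also have "(1 - w) * x + w * y = K * s + L * u"
    using assms(1,2) by (simp add: x_def y_def one_minus_w w_def)
  finally show ?thesis .
qed

lemma extremal_case_weight_small:
  fixes m k p :: real
  assumes m: "1 \<le> m" and k: "1 \<le> k" and p: "0 < p" "p < 1"
  defines "c \<equiv> 1 - 1 / (m + k + 1)"
  defines "e \<equiv> 1 - c powr p"
  shows "p * (e * m) + (1 - p) * (1 + e * (m + k - 1)) \<le> (c * m) powr p"
proof -
  have c: "0 < c"
    using m k by (simp add: c_def field_simps)
  have "0 < e" and e_le: "e * (m + k) \<le> p"
    using one_minus_powr_one_minus_inverse_bounds [of "m + k" p] m k p
    by (simp_all add: e_def c_def)
  have "p * (e * m) + (1 - p) * (1 + e * (m + k - 1)) \<le> 1 - p + e * (m + k - 1)"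
    using \<open>0 < e\<close> p k mult_left_mono [of m "m + k - 1" "p * e"] by (simp add: algebra_simps)
  also have "\<dots> \<le> c powr p"
    using e_le by (simp add: e_def algebra_simps)
  also have "\<dots> \<le> (c * m) powr p"
    using c m p by (intro powr_mono2) auto
  finally show ?thesis .
qed

lemma extremal_case_weight_large:
  fixes m k p :: real
  assumes m: "1 \<le> m" and k: "1 \<le> k" and p: "0 < p" "p < 1"
  defines "c \<equiv> 1 - 1 / (m + k + 1)"
  defines "e \<equiv> 1 - c powr p"
  shows "p * (1 + e * (k - 1)) + (1 - p) * (1 + e * (m + k - 1)) \<le> (c * (m + 2)) powr p"
proof -
  have c: "0 < c" and c_inv: "1 / c - 1 = 1 / (m + k)"
    using m k by (auto simp: c_def field_simps)
  have "0 < e" and e_le: "e * (m + k) \<le> p"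
    using one_minus_powr_one_minus_inverse_bounds [of "m + k" p] m k p
    by (simp_all add: e_def c_def)
  have "p * (1 + e * (k - 1)) + (1 - p) * (1 + e * (m + k - 1)) \<le> 1 + e * (m + k - 1)"
    using \<open>0 < e\<close> p m mult_left_mono [of "k - 1" "m + k - 1" "p * e"] by (simp add: algebra_simps)
  also have "\<dots> = 1 + e * (m + k) * (1 - 1 / (m + k))"
    using m k by (simp add: field_simps)
  also have "\<dots> \<le> 1 + p * (1 - 1 / (m + k))"
    using e_le m k by (simp add: mult_right_mono)
  also have "\<dots> \<le> 1 + p * ln (c * (m + 2))"
  proof -
    have "1 \<le> ln (m + 2)"
      using exp_le m by (subst ln_ge_iff) auto
    then have "1 - 1 / (m + k) \<le> ln (c * (m + 2))"
      using ln_ge_one_minus_inverse [of c] c c_inv m by (simp add: ln_mult)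
    then show ?thesis
      using p by simp
  qed
  also have "\<dots> \<le> (c * (m + 2)) powr p"
    using c m by (intro one_add_mult_ln_le_powr) simp
  finally show ?thesis .
qed

lemma extremal_case_inequality:
  fixes m k p s u :: real
  assumes m: "1 \<le> m" and k: "1 \<le> k" and p: "0 < p" "p < 1" and "0 \<le> s" "0 \<le> u"
  defines "c \<equiv> 1 - 1 / (m + k + 1)"
  shows "(1 - c powr p) * m * s powr p + (1 + (1 - c powr p) * (k - 1)) * u powr p
           \<le> c powr p * (m * s + (m + 2) * u) powr p"
proof -
  define e where "e = 1 - c powr p"
  have "0 < c"
    using m k by (simp add: c_def field_simps)
  have "0 < e"
    using one_minus_powr_one_minus_inverse_bounds(1) [of "m + k" p] m k p
    by (simp add: e_def c_def)
  have "e * m * s powr p + (1 + e * (k - 1)) * u powr p \<le> (c * m * s + c * (m + 2) * u) powr p"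
  proof (rule two_point_powr_le)
    show "p * (e * m) + (1 - p) * (e * m + (1 + e * (k - 1))) \<le> (c * m) powr p"
      using extremal_case_weight_small [OF m k p, folded c_def, folded e_def]
      by (simp add: algebra_simps)
    show "p * (1 + e * (k - 1)) + (1 - p) * (e * m + (1 + e * (k - 1))) \<le> (c * (m + 2)) powr p"
      using extremal_case_weight_large [OF m k p, folded c_def, folded e_def]
      by (simp add: algebra_simps)
  qed (use \<open>0 < e\<close> m k p \<open>0 \<le> s\<close> \<open>0 \<le> u\<close> \<open>0 < c\<close> in \<open>auto simp: add_pos_nonneg\<close>)
  also have "(c * m * s + c * (m + 2) * u) powr p = c powr p * (m * s + (m + 2) * u) powr p"
    using \<open>0 < c\<close> m \<open>0 \<le> s\<close> \<open>0 \<le> u\<close> by (subst powr_mult [symmetric]) (auto simp: algebra_simps)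
  finally show ?thesis
    by (simp add: e_def)
qed

lemma inequality_from_extremal_bounds:
  fixes m k p s u X Y :: real
  assumes m: "1 \<le> m" and k: "1 \<le> k" and p: "0 < p" "p < 1" and su: "0 \<le> s" "0 \<le> u"
    and X: "X \<le> m * s powr p"
    and Y: "(k - 1) * u powr p + (m * s + (m + 2) * u) powr p \<le> Y"
  shows "X + k * u powr p \<le> (1 - 1 / (m + k + 1)) powr p * (X + Y)"
proof -
  define q where "q = (1 - 1 / (m + k + 1)) powr p"
  have "q \<le> 1"
    using m k p by (auto simp: q_def intro: powr_le1)
  have "(1 - q) * X \<le> (1 - q) * (m * s powr p)"
    using X \<open>q \<le> 1\<close> by (simp add: mult_left_mono)
  moreover have "q * ((k - 1) * u powr p + (m * s + (m + 2) * u) powr p) \<le> q * Y"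
    using Y by (simp add: q_def mult_left_mono)
  moreover have "(1 - q) * m * s powr p + (1 + (1 - q) * (k - 1)) * u powr p
      \<le> q * (m * s + (m + 2) * u) powr p"
    unfolding q_def by (rule extremal_case_inequality [OF m k p su])
  ultimately show ?thesis
    unfolding q_def [symmetric] by (simp add: algebra_simps)
qed

theorem proposition4:
  fixes r n :: nat and p u :: real and x y :: "nat \<Rightarrow> real"
  assumes "2 \<le> r" and "r < n"
    and "0 < p" and "p < 1"
    and "\<And>i. i \<in> {r+1..n} \<Longrightarrow> x i \<ge> 0"
    and "0 \<le> u"
    and "\<And>i. i \<in> {1..r-1} \<Longrightarrow> y i \<ge> u"
    and "(\<Sum>i=r+1..n. x i) + real n * u = (\<Sum>i=1..r-1. y i)"
  shows "(\<Sum>i=r+1..n. x i powr p) + real (r - 1) * u powr p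
         \<le> (1 - 1 / real n) powr p * ((\<Sum>i=r+1..n. x i powr p) + (\<Sum>i=1..r-1. y i powr p))"
proof -
  define m where "m = real (n - r)"
  define k where "k = real (r - 1)"
  define s where "s = (\<Sum>i=r+1..n. x i) / m"
  have m: "1 \<le> m" and k: "1 \<le> k" and n: "real n = m + k + 1"
    using assms(1,2) by (auto simp: m_def k_def)
  have "0 \<le> s"
    using assms(5) m unfolding s_def by (intro divide_nonneg_nonneg sum_nonneg) auto
  have excess: "u + (\<Sum>i=1..r-1. y i - u) = m * s + (m + 2) * u"
  proof -
    have "(\<Sum>i=1..r-1. y i - u) = (\<Sum>i=r+1..n. x i) + real n * u - k * u"
      using assms(8) by (simp add: sum_subtractf k_def)
    also have "(\<Sum>i=r+1..n. x i) = m * s"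
      using m by (simp add: s_def)
    finally show ?thesis
      using n by (simp add: algebra_simps)
  qed
  have "(\<Sum>i=r+1..n. x i powr p) \<le> m * s powr p"
    using concave_on_sum_le_card_mult_mean [OF concave_on_powr, of p "{r+1..n}" x] assms(2-5)
    by (simp add: s_def m_def)
  moreover have "(k - 1) * u powr p + (m * s + (m + 2) * u) powr p \<le> (\<Sum>i=1..r-1. y i powr p)"
    using sum_powr_ge_concentrated [of u p "{1..r-1}" y] assms(3,4,6,7) excess
    by (simp add: k_def)
  ultimately show ?thesis
    using inequality_from_extremal_bounds [OF m k assms(3,4) \<open>0 \<le> s\<close> assms(6)]
    by (simp add: n k_def)
qed

end
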